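(* Let $(A_C,\mathcal R_A)$ be an autocatalytic core of a CRN. Then for every species $X\in A_C$ there is a reaction $r^-\to r^+$ in $\mathcal R_A$ such that $X$ is the only species of $A_C$ occurring in $r^-$, i.e. $\{Y\in A_C: r^-_Y>0\}=\{X\}$.
   Context: A chemical reaction network (CRN) consists of a finite species set $\mathcal S$ and a finite set $\mathcal R$ of reactions; each reaction $r$ is written $r^-\to r^+$ with input complex $r^-\in\mathbb Z_{\ge0}^{\mathcal S}$ and output complex $r^+\in\mathbb Z_{\ge0}^{\mathcal S}$. The input and output matrices $\mathbb S^-,\mathbb S^+$ are the $\mathcal S\times\mathcal R$ matrices whose column indexed by $r$ is $r^-$, resp. $r^+$; the stoichiometric matrix is $\mathbb S=\mathbb S^+-\mathbb S^-$. For a matrix $\mathbb A$ with rows indexed by $\mathcal S$ and columns by $\mathcal R$ and subsets $M\subseteq\mathcal S$, $N\subseteq\mathcal R$, $(\mathbb A)_M^N$ is the submatrix with rows in $M$ and columns in $N$. For a vector $\mathbf v$: $\mathbf v\gg\mathbf 0$ means all entries are $>0$; $\mathbf v>\mathbf 0$ (semi-positive) means all entries are $\ge0$ and $\mathbf v\ne\mathbf 0$. A motif is a pair $(\mathcal M,\mathcal R')$ with $\mathcal M\subseteq\mathcal S$, $\mathcal R'\subseteq\mathcal R$. It is exclusively autocatalytic if: (i) there is $\mathbf v\in\mathbb R^{\mathcal R'}$, $\mathbf v\gg\mathbf0$, with $(\mathbb S)_{\mathcal M}^{\mathcal R'}\mathbf v\gg\mathbf 0$; (ii) every row of $(\mathbb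 S^-)_{\mathcal M}^{\mathcal R'}$ is semi-positive; (iii) every column of $(\mathbb S^-)_{\mathcal M}^{\mathcal R'}$ is semi-positive. An autocatalytic core is an exclusively autocatalytic motif $(A_C,\mathcal R_A)$ such that no motif $(\mathcal M',\mathcal R'')\neq(A_C,\mathcal R_A)$ with $\mathcal M'\subseteq A_C$ and $\mathcal R''\subseteq\mathcal R_A$ is exclusively autocatalytic; $A_C$ is called its core set. *)

theory Defs
  imports Main "HOL-Analysis.Analysis"
begin

text \<open>A chemical reaction network: a finite species set S, a finite reaction set R,
  and for each reaction r its input complex rm r and output complex rp r,
  both maps from species to nonnegative integers (nat).  The matrices
  S^- and S^+ have entries (S^-)_{s,r} = rm r s and (S^+)_{s,r} = rp r s.\<close>

definition CRN :: "'s set \<Rightarrow> 'r set \<Rightarrow> bool" where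
  "CRN Sp Rs \<longleftrightarrow> finite Sp \<and> finite Rs"

definition stoich :: "('r \<Rightarrow> 's \<Rightarrow> nat) \<Rightarrow> ('r \<Rightarrow> 's \<Rightarrow> nat) \<Rightarrow> 's \<Rightarrow> 'r \<Rightarrow> real" where
  "stoich rm rp s r = real (rp r s) - real (rm r s)"

definition semipos :: "'i set \<Rightarrow> ('i \<Rightarrow> real) \<Rightarrow> bool" where
  "semipos I w \<longleftrightarrow> (\<forall>i\<in>I. w i \<ge> 0) \<and> (\<exists>i\<in>I. w i \<noteq> 0)"

definition excl_autocatalytic ::
  "'s set \<Rightarrow> 'r set \<Rightarrow> ('r \<Rightarrow> 's \<Rightarrow> nat) \<Rightarrow> ('r \<Rightarrow> 's \<Rightarrow> nat) \<Rightarrow> 's set \<Rightarrow> 'r set \<Rightarrow> bool" where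
  "excl_autocatalytic Sp Rs rm rp M R' \<longleftrightarrow>
     M \<subseteq> Sp \<and> R' \<subseteq> Rs \<and> M \<noteq> {} \<and> R' \<noteq> {} \<and>
     (\<exists>v :: 'r \<Rightarrow> real. (\<forall>r\<in>R'. v r > 0) \<and>
        (\<forall>s\<in>M. (\<Sum>r\<in>R'. stoich rm rp s r * v r) > 0)) \<and>
     (\<forall>s\<in>M. semipos R' (\<lambda>r. real (rm r s))) \<and>
     (\<forall>r\<in>R'. semipos M (\<lambda>s. real (rm r s)))"

definition autocatalytic_core ::
  "'s set \<Rightarrow> 'r set \<Rightarrow> ('r \<Rightarrow> 's \<Rightarrow> nat) \<Rightarrow> ('r \<Rightarrow> 's \<Rightarrow> nat) \<Rightarrow> 's set \<Rightarrow> 'r set \<Rightarrow> bool" where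
  "autocatalytic_core Sp Rs rm rp AC RA \<longleftrightarrow>
     excl_autocatalytic Sp Rs rm rp AC RA \<and>
     (\<forall>M' R''. M' \<subseteq> AC \<and> R'' \<subseteq> RA \<and> (M', R'') \<noteq> (AC, RA)
        \<longrightarrow> \<not> excl_autocatalytic Sp Rs rm rp M' R'')"

end

theory Submission
  imports Defs
begin

text \<open>If no reaction of the core had X as its only core input, every reaction of the core
  would still consume some species of the core other than X. Removing X then keeps the motif
  exclusively autocatalytic: flow positivity and the row condition only concern the remaining
  species, and the column condition is exactly that observation. This contradicts minimality.\<close>

lemma excl_autocatalytic_restrict_species:
  assumes "excl_autocatalytic Sp Rs rm rp M R'"
    and "M' \<subseteq> M"
    and consumes: "\<forall>r\<in>R'. \<exists>s\<in>M'. rm r s > 0"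
  shows "excl_autocatalytic Sp Rs rm rp M' R'"
proof -
  have "R' \<noteq> {}"
    using assms(1) unfolding excl_autocatalytic_def by blast
  with consumes have "M' \<noteq> {}"
    by blast
  moreover have "\<forall>r\<in>R'. semipos M' (\<lambda>s. real (rm r s))"
    using consumes unfolding semipos_def by force
  ultimately show ?thesis
    using assms(1,2) unfolding excl_autocatalytic_def by blast
qed

lemma consumes_other_species:
  assumes "semipos AC (\<lambda>s. real (rm r s))"
    and "{Y\<in>AC. rm r Y > 0} \<noteq> {X}"
  shows "\<exists>s\<in>AC - {X}. rm r s > 0"
proof -
  obtain s where "s \<in> AC" "rm r s > 0"
    using assms(1) unfolding semipos_def by auto
  then show ?thesis
    using assms(2) by blast
qed

theorem mainTheorem3:
  fixes Sp :: "'s set" and Rs :: "'r set"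
    and rm rp :: "'r \<Rightarrow> 's \<Rightarrow> nat"
    and AC :: "'s set" and RA :: "'r set"
  assumes "CRN Sp Rs"
    and "autocatalytic_core Sp Rs rm rp AC RA"
  shows "\<forall>X\<in>AC. \<exists>r\<in>RA. {Y\<in>AC. rm r Y > 0} = {X}"
proof (rule ballI, rule ccontr)
  fix X
  assume "X \<in> AC" and no_sole_input: "\<not> (\<exists>r\<in>RA. {Y\<in>AC. rm r Y > 0} = {X})"
  have core: "excl_autocatalytic Sp Rs rm rp AC RA"
    and minimal: "\<And>M' R''. M' \<subseteq> AC \<Longrightarrow> R'' \<subseteq> RA \<Longrightarrow> (M', R'') \<noteq> (AC, RA)
        \<Longrightarrow> \<not> excl_autocatalytic Sp Rs rm rp M' R''"
    using assms(2) unfolding autocatalytic_core_def by blast+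
  have "\<forall>r\<in>RA. semipos AC (\<lambda>s. real (rm r s))"
    using core unfolding excl_autocatalytic_def by blast
  then have "\<forall>r\<in>RA. \<exists>s\<in>AC - {X}. rm r s > 0"
    using no_sole_input by (auto intro: consumes_other_species)
  then have "excl_autocatalytic Sp Rs rm rp (AC - {X}) RA"
    using excl_autocatalytic_restrict_species[OF core] by blast
  moreover have "(AC - {X}, RA) \<noteq> (AC, RA)"
    using \<open>X \<in> AC\<close> by auto
  ultimately show False
    using minimal by blast
qed

end
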